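(* Let $v_1,v_2\in L_2(-\infty,+\infty)$ be complex-valued and $\alpha\in\mathbb{R}$. Let $A(v_1,v_2,\alpha)$ be the operator in $L_2(-\infty,+\infty)$ acting by $$A(v_1,v_2,\alpha)\psi(x)=i\psi'(x)+v_1(x)\Big[\psi(-0)+\tfrac{i}{2}\langle\psi,v_1\rangle\Big]+v_2(x)\Big[\psi(+0)-\tfrac{i}{2}\langle\psi,v_2\rangle\Big],\quad x\neq0,$$ on the domain $$\{\psi\in W_2^1(\Omega):\ \psi(+0)-i\langle\psi,v_2\rangle=e^{i\alpha}[\psi(-0)+i\langle\psi,v_1\rangle]\}.$$ Then $A(v_1,v_2,\alpha)$ is a (densely defined) symmetric operator in $L_2(-\infty,+\infty)$.
   Context: $\Omega=\mathbb{R}\setminus\{0\}$; $W_2^1(\Omega)$ is the space of functions whose restrictions to each of the half-lines $(-\infty,0)$, $(0,\infty)$ belong to $W_2^1$ of that half-line; $\psi(\pm0)$ are the one-sided limits at $0$. $\langle f,g\rangle=\int_{-\infty}^{\infty}f(x)\overline{g(x)}\,dx$ is the $L_2$ inner product. *)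

theory Defs
  imports "HOL-Analysis.Analysis"
begin

text \<open>Complex-valued square integrable functions on the real line
  (concrete representatives; L2 classes are identified a.e.).\<close>
definition L2 :: "(real \<Rightarrow> complex) \<Rightarrow> bool" where
  "L2 f \<longleftrightarrow> f \<in> borel_measurable lborel \<and> integrable lborel (\<lambda>x. (cmod (f x))\<^sup>2)"

definition L2_norm :: "(real \<Rightarrow> complex) \<Rightarrow> real" where
  "L2_norm f = sqrt (LINT x|lborel. (cmod (f x))\<^sup>2)"

definition ip :: "(real \<Rightarrow> complex) \<Rightarrow> (real \<Rightarrow> complex) \<Rightarrow> complex" where
  "ip f g = (LINT x|lborel. f x * cnj (g x))"

text \<open>dpsi is a (weak) derivative of psi on Omega = R minus 0, lying in L2:
  psi is (the continuous representative) absolutely continuous on each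
  half-line with derivative dpsi.\<close>
definition is_deriv_Omega :: "(real \<Rightarrow> complex) \<Rightarrow> (real \<Rightarrow> complex) \<Rightarrow> bool" where
  "is_deriv_Omega psi dpsi \<longleftrightarrow> L2 dpsi \<and>
     (\<forall>x y. x \<le> y \<and> (0 < x \<or> y < 0) \<longrightarrow>
        psi y - psi x = (LINT t:{x..y}|lborel. dpsi t))"

definition W21_Omega :: "(real \<Rightarrow> complex) \<Rightarrow> bool" where
  "W21_Omega psi \<longleftrightarrow> L2 psi \<and> (\<exists>dpsi. is_deriv_Omega psi dpsi)"

definition lim_minus0 :: "(real \<Rightarrow> complex) \<Rightarrow> complex" where
  "lim_minus0 psi = Lim (at_left 0) psi"

definition lim_plus0 :: "(real \<Rightarrow> complex) \<Rightarrow> complex" where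
  "lim_plus0 psi = Lim (at_right 0) psi"

definition A_op :: "(real \<Rightarrow> complex) \<Rightarrow> (real \<Rightarrow> complex) \<Rightarrow>
    (real \<Rightarrow> complex) \<Rightarrow> (real \<Rightarrow> complex) \<Rightarrow> real \<Rightarrow> complex" where
  "A_op v1 v2 psi dpsi x =
     \<i> * dpsi x + v1 x * (lim_minus0 psi + (\<i>/2) * ip psi v1)
                + v2 x * (lim_plus0 psi - (\<i>/2) * ip psi v2)"

definition dom_A :: "(real \<Rightarrow> complex) \<Rightarrow> (real \<Rightarrow> complex) \<Rightarrow> real \<Rightarrow> (real \<Rightarrow> complex) set" where
  "dom_A v1 v2 \<alpha> = {psi. W21_Omega psi \<and>
     lim_plus0 psi - \<i> * ip psi v2 = exp (\<i> * complex_of_real \<alpha>) * (lim_minus0 psi + \<i> * ip psi v1)}"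

end

theory Submission
  imports Defs
begin

text \<open>
  For psi, phi in W_2^1(Omega), integration by parts on each half-line (the
  boundary terms at infinity vanish because psi * cnj phi is integrable) gives Green's formula
    <A psi, phi> - <psi, A phi> = i (a(psi) cnj a(phi) - b(psi) cnj b(phi))
  with a(psi) = psi(-0) + i<psi,v1> and b(psi) = psi(+0) - i<psi,v2>; the domain condition
  b = e^(i alpha) a makes the right-hand side vanish.

  Truncation reduces an L2 function f to a bounded one with bounded support. Its
  Steklov averages (1/c) int_x^(x+c) f lie in W_2^1(Omega), with derivative
  (f(x+c) - f(x))/c, and converge to f almost everywhere by Lebesgue's differentiation
  theorem, hence in L2 by dominated convergence. A function g in W_2^1(Omega) is then moved
  into the domain by adding a multiple of the ramp (1 - x/delta)_+ on x > 0: it jumps by 1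
  at 0 while its norm and its inner products with v1, v2 tend to 0 with delta, so the
  multiple solving the boundary condition stays bounded and the correction is small in L2.
\<close>

section \<open>Square-integrable functions and the inner product\<close>

abbreviation L2_dist_sq :: "(real \<Rightarrow> complex) \<Rightarrow> (real \<Rightarrow> complex) \<Rightarrow> real" where
  "L2_dist_sq f g \<equiv> \<integral>x. (cmod (f x - g x))\<^sup>2 \<partial>lborel"

lemma L2_measurable: "L2 f \<Longrightarrow> f \<in> borel_measurable borel"
  unfolding L2_def by simp

lemma integrable_L2_square: "L2 f \<Longrightarrow> integrable lborel (\<lambda>x. (cmod (f x))\<^sup>2)"
  unfolding L2_def by simp

lemma norm_add_square_le: "(norm (a + b))\<^sup>2 \<le> 2 * (norm a)\<^sup>2 + 2 * (norm b)\<^sup>2"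
  for a b :: "'a::real_normed_vector"
proof -
  have "(norm (a + b))\<^sup>2 \<le> (norm a + norm b)\<^sup>2"
    by (simp add: norm_triangle_ineq power_mono)
  also have "\<dots> \<le> 2 * (norm a)\<^sup>2 + 2 * (norm b)\<^sup>2"
    using sum_squares_bound[of "norm a" "norm b"] by (simp add: power2_sum)
  finally show ?thesis .
qed

lemma L2_add:
  assumes "L2 f" "L2 g" shows "L2 (\<lambda>x. f x + g x)"
  unfolding L2_def
proof
  show "(\<lambda>x. f x + g x) \<in> borel_measurable lborel"
    using assms[THEN L2_measurable] by measurable
  show "integrable lborel (\<lambda>x. (cmod (f x + g x))\<^sup>2)"
  proof (rule Bochner_Integration.integrable_bound)
    show "integrable lborel (\<lambda>x. 2 * (cmod (f x))\<^sup>2 + 2 * (cmod (g x))\<^sup>2)"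
      using assms by (intro Bochner_Integration.integrable_add integrable_mult_right integrable_L2_square)
    show "AE x in lborel. norm ((cmod (f x + g x))\<^sup>2) \<le> norm (2 * (cmod (f x))\<^sup>2 + 2 * (cmod (g x))\<^sup>2)"
      using norm_add_square_le by (auto intro!: AE_I2)
  qed (use assms[THEN L2_measurable] in measurable)
qed

lemma L2_mult_left:
  assumes "L2 f" shows "L2 (\<lambda>x. c * f x)"
  unfolding L2_def
proof
  show "(\<lambda>x. c * f x) \<in> borel_measurable lborel"
    using assms[THEN L2_measurable] by measurable
  have "integrable lborel (\<lambda>x. (cmod c)\<^sup>2 * (cmod (f x))\<^sup>2)"
    using assms by (intro integrable_mult_right integrable_L2_square)
  thus "integrable lborel (\<lambda>x. (cmod (c * f x))\<^sup>2)"
    by (simp add: norm_mult power_mult_distrib)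
qed

lemma L2_diff: "L2 f \<Longrightarrow> L2 g \<Longrightarrow> L2 (\<lambda>x. f x - g x)"
  using L2_add[of f "\<lambda>x. - 1 * g x"] L2_mult_left[of g "- 1"] by simp

lemma borel_measurable_cnj [measurable]:
  "f \<in> borel_measurable M \<Longrightarrow> (\<lambda>x. cnj (f x)) \<in> borel_measurable M"
  by (rule borel_measurable_continuous_on[OF continuous_on_cnj[OF continuous_on_id]])

lemma L2_cnj: "L2 f \<Longrightarrow> L2 (\<lambda>x. cnj (f x))"
  unfolding L2_def by auto

lemma L2_bounded_support:
  assumes [measurable]: "f \<in> borel_measurable borel"
    and bounded: "\<And>x. cmod (f x) \<le> M" and support: "\<And>x. x \<notin> {a..b} \<Longrightarrow> f x = 0"
  shows "L2 f"
  unfolding L2_def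
proof
  show "integrable lborel (\<lambda>x. (cmod (f x))\<^sup>2)"
  proof (rule Bochner_Integration.integrable_bound)
    show "integrable lborel (\<lambda>x. M\<^sup>2 * indicator {a..b} x :: real)"
      by (intro integrable_mult_right) (simp add: integrable_indicator_iff emeasure_lborel_Icc_eq)
    have "(cmod (f x))\<^sup>2 \<le> M\<^sup>2 * indicator {a..b} x" for x
      using support[of x] bounded[of x] by (auto simp: indicator_def intro: power_mono)
    thus "AE x in lborel. norm ((cmod (f x))\<^sup>2) \<le> norm (M\<^sup>2 * indicator {a..b} x :: real)"
      by (intro AE_I2) simp
  qed simp
qed simp

lemma L2_dist_sq_triangle:
  assumes "L2 f" "L2 g" "L2 h"
  shows "L2_dist_sq f h \<le> 2 * L2_dist_sq f g + 2 * L2_dist_sq g h"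
proof -
  have fg: "integrable lborel (\<lambda>x. (cmod (f x - g x))\<^sup>2)"
    and gh: "integrable lborel (\<lambda>x. (cmod (g x - h x))\<^sup>2)"
    and fh: "integrable lborel (\<lambda>x. (cmod (f x - h x))\<^sup>2)"
    using assms by (auto intro: integrable_L2_square L2_diff)
  have "L2_dist_sq f h \<le> (\<integral>x. 2 * (cmod (f x - g x))\<^sup>2 + 2 * (cmod (g x - h x))\<^sup>2 \<partial>lborel)"
    using norm_add_square_le[of "f x - g x" "g x - h x" for x]
    by (intro integral_mono fh Bochner_Integration.integrable_add integrable_mult_right fg gh) simp
  also have "\<dots> = 2 * L2_dist_sq f g + 2 * L2_dist_sq g h"
    using fg gh by simp
  finally show ?thesis .
qed

lemma integrable_mult_L2:
  assumes "L2 f" "L2 g" shows "integrable lborel (\<lambda>x. f x * g x)"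
proof (rule Bochner_Integration.integrable_bound)
  show "integrable lborel (\<lambda>x. (cmod (f x))\<^sup>2 / 2 + (cmod (g x))\<^sup>2 / 2)"
    using assms by (intro Bochner_Integration.integrable_add integrable_divide_zero integrable_L2_square)
  have "cmod (f x * g x) \<le> (cmod (f x))\<^sup>2 / 2 + (cmod (g x))\<^sup>2 / 2" for x
    using sum_squares_bound[of "cmod (f x)" "cmod (g x)"] by (simp add: norm_mult)
  thus "AE x in lborel. norm (f x * g x) \<le> norm ((cmod (f x))\<^sup>2 / 2 + (cmod (g x))\<^sup>2 / 2)"
    by (intro AE_I2) simp
qed (use assms[THEN L2_measurable] in measurable)

lemma integrable_ip_L2: "L2 f \<Longrightarrow> L2 g \<Longrightarrow> integrable lborel (\<lambda>x. f x * cnj (g x))"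
  by (intro integrable_mult_L2 L2_cnj)

lemma set_integrable_L2_Icc:
  assumes "L2 f" shows "set_integrable lborel {a..b} f"
proof -
  have "L2 (\<lambda>x. of_real (indicator {a..b} x))"
    by (rule L2_bounded_support[where M=1 and a=a and b=b]) (auto simp: indicator_def)
  hence "integrable lborel (\<lambda>x. of_real (indicator {a..b} x) * f x)"
    using assms by (intro integrable_mult_L2)
  thus ?thesis
    unfolding set_integrable_def by (simp add: scaleR_conv_of_real)
qed

lemma ip_commute: "ip g f = cnj (ip f g)"
  unfolding ip_def using Bochner_Integration.integral_cnj[of lborel "\<lambda>x. f x * cnj (g x)"]
  by (simp add: mult.commute)

lemma ip_add_left: "L2 f \<Longrightarrow> L2 g \<Longrightarrow> L2 h \<Longrightarrow> ip (\<lambda>x. f x + g x) h = ip f h + ip g h"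
  unfolding ip_def by (simp add: distrib_right integrable_ip_L2)

lemma ip_mult_left: "ip (\<lambda>x. c * f x) g = c * ip f g"
  unfolding ip_def by (simp add: mult.assoc)

lemma norm_ip_le_weighted:
  assumes "L2 f" "L2 g" "t > 0"
  shows "cmod (ip f g) \<le> (t * (\<integral>x. (cmod (f x))\<^sup>2 \<partial>lborel) + (\<integral>x. (cmod (g x))\<^sup>2 \<partial>lborel) / t) / 2"
proof -
  have amgm: "a * b \<le> (t * a\<^sup>2 + b\<^sup>2 / t) / 2" for a b :: real
  proof -
    have "0 \<le> (t * a - b)\<^sup>2 / (2 * t)" using assms(3) by simp
    also have "\<dots> = (t * a\<^sup>2 + b\<^sup>2 / t) / 2 - a * b"
      using assms(3) by (simp add: field_simps power2_eq_square)
    finally show ?thesis by simp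
  qed
  have "cmod (ip f g) \<le> (\<integral>x. cmod (f x * cnj (g x)) \<partial>lborel)"
    unfolding ip_def by (rule integral_norm_bound)
  also have "\<dots> \<le> (\<integral>x. (t * (cmod (f x))\<^sup>2 + (cmod (g x))\<^sup>2 / t) / 2 \<partial>lborel)"
    using assms amgm[of "cmod (f _)" "cmod (g _)"]
    by (intro integral_mono integrable_norm integrable_ip_L2 integrable_divide_zero
        Bochner_Integration.integrable_add integrable_mult_right integrable_L2_square)
      (simp_all add: norm_mult)
  also have "\<dots> = (t * (\<integral>x. (cmod (f x))\<^sup>2 \<partial>lborel) + (\<integral>x. (cmod (g x))\<^sup>2 \<partial>lborel) / t) / 2"
    using assms by (simp add: integrable_L2_square)
  finally show ?thesis .
qed

lemma norm_ip_le_L2_norm: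
  assumes f: "L2 f" and g: "L2 g"
  shows "cmod (ip f g) \<le> L2_norm f * L2_norm g"
proof -
  define A where "A = (\<integral>x. (cmod (f x))\<^sup>2 \<partial>lborel)"
  define B where "B = (\<integral>x. (cmod (g x))\<^sup>2 \<partial>lborel)"
  have "A \<ge> 0" "B \<ge> 0" unfolding A_def B_def by simp_all
  have bound: "cmod (ip f g) \<le> sqrt (A + \<epsilon>) * sqrt (B + \<epsilon>)" if "\<epsilon> > 0" for \<epsilon>
  proof -
    define t where "t = sqrt (B + \<epsilon>) / sqrt (A + \<epsilon>)"
    have pos: "A + \<epsilon> > 0" "B + \<epsilon> > 0" using \<open>A \<ge> 0\<close> \<open>B \<ge> 0\<close> that by linarith+
    hence "t > 0" unfolding t_def by simp
    have "cmod (ip f g) \<le> (t * A + B / t) / 2"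
      unfolding A_def B_def by (rule norm_ip_le_weighted[OF f g \<open>t > 0\<close>])
    also have "\<dots> \<le> (t * (A + \<epsilon>) + (B + \<epsilon>) / t) / 2"
      using \<open>t > 0\<close> that by (intro divide_right_mono add_mono mult_left_mono) auto
    also have "\<dots> = sqrt (A + \<epsilon>) * sqrt (B + \<epsilon>)"
      using pos by (simp add: t_def field_simps)
    finally show ?thesis .
  qed
  have "((\<lambda>\<epsilon>. sqrt (A + \<epsilon>) * sqrt (B + \<epsilon>)) \<longlongrightarrow> sqrt (A + 0) * sqrt (B + 0)) (at_right 0)"
    by (intro tendsto_intros)
  moreover have "\<forall>\<^sub>F \<epsilon> in at_right 0. cmod (ip f g) \<le> sqrt (A + \<epsilon>) * sqrt (B + \<epsilon>)"
    using eventually_at_right_less[of 0] by eventually_elim (rule bound)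
  ultimately have "cmod (ip f g) \<le> sqrt A * sqrt B"
    by (intro tendsto_lowerbound) auto
  thus ?thesis unfolding L2_norm_def A_def B_def .
qed

section \<open>The space W_2^1(Omega)\<close>

lemma is_deriv_Omega_L2: "is_deriv_Omega psi dpsi \<Longrightarrow> L2 dpsi"
  unfolding is_deriv_Omega_def by simp

lemma is_deriv_Omega_integral:
  "is_deriv_Omega psi dpsi \<Longrightarrow> x \<le> y \<Longrightarrow> 0 < x \<or> y < 0 \<Longrightarrow>
     psi y - psi x = (LINT t:{x..y}|lborel. dpsi t)"
  unfolding is_deriv_Omega_def by blast

lemma W21_Omega_L2: "W21_Omega psi \<Longrightarrow> L2 psi"
  unfolding W21_Omega_def by simp

lemma W21_Omega_add_mult:
  assumes "W21_Omega f" "W21_Omega g"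
  shows "W21_Omega (\<lambda>x. f x + c * g x)"
proof -
  obtain df dg where df: "is_deriv_Omega f df" and dg: "is_deriv_Omega g dg"
    using assms unfolding W21_Omega_def by blast
  have "is_deriv_Omega (\<lambda>x. f x + c * g x) (\<lambda>x. df x + c * dg x)"
    unfolding is_deriv_Omega_def
  proof (intro conjI allI impI)
    show "L2 (\<lambda>x. df x + c * dg x)"
      using df dg by (intro L2_add L2_mult_left is_deriv_Omega_L2)
    fix x y :: real assume "x \<le> y \<and> (0 < x \<or> y < 0)"
    hence "f y - f x = (LINT t:{x..y}|lborel. df t)" "g y - g x = (LINT t:{x..y}|lborel. dg t)"
      using df dg by (auto intro: is_deriv_Omega_integral)
    moreover have "(LINT t:{x..y}|lborel. df t + c * dg t)
        = (LINT t:{x..y}|lborel. df t) + c * (LINT t:{x..y}|lborel. dg t)"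
      using df dg by (simp add: set_integral_add set_integrable_L2_Icc is_deriv_Omega_L2)
    ultimately show "f y + c * g y - (f x + c * g x) = (LINT t:{x..y}|lborel. df t + c * dg t)"
      by (simp add: algebra_simps)
  qed
  moreover have "L2 (\<lambda>x. f x + c * g x)"
    using assms by (intro L2_add L2_mult_left W21_Omega_L2)
  ultimately show ?thesis
    unfolding W21_Omega_def by blast
qed

lemma lim_plus0_eq: "(f \<longlongrightarrow> L) (at_right 0) \<Longrightarrow> lim_plus0 f = L"
  unfolding lim_plus0_def by (rule tendsto_Lim) simp

lemma lim_minus0_eq: "(f \<longlongrightarrow> L) (at_left 0) \<Longrightarrow> lim_minus0 f = L"
  unfolding lim_minus0_def by (rule tendsto_Lim) simp

lemma is_deriv_Omega_tendsto_plus0: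
  assumes d: "is_deriv_Omega psi dpsi"
  shows "(psi \<longlongrightarrow> lim_plus0 psi) (at_right 0)"
proof -
  have "set_integrable lborel {0<..1} dpsi"
    by (rule set_integrable_subset[OF set_integrable_L2_Icc[OF is_deriv_Omega_L2[OF d], of 0 1]]) auto
  hence "((\<lambda>t. LINT s:{t..1}|lborel. dpsi s) \<longlongrightarrow> (LINT s:{0<..1}|lborel. dpsi s)) (at_right 0)"
    by (intro tendsto_set_lebesgue_integral_at_right) auto
  hence "((\<lambda>t. psi 1 - (LINT s:{t..1}|lborel. dpsi s)) \<longlongrightarrow> psi 1 - (LINT s:{0<..1}|lborel. dpsi s)) (at_right 0)"
    by (intro tendsto_intros)
  moreover have "\<forall>\<^sub>F t in at_right 0. psi 1 - (LINT s:{t..1}|lborel. dpsi s) = psi t"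
    by (intro eventually_at_rightI[of 0 1]) (simp_all add: is_deriv_Omega_integral[OF d, symmetric])
  ultimately have "(psi \<longlongrightarrow> psi 1 - (LINT s:{0<..1}|lborel. dpsi s)) (at_right 0)"
    by (rule Lim_transform_eventually)
  thus ?thesis by (simp add: lim_plus0_eq)
qed

lemma is_deriv_Omega_tendsto_minus0:
  assumes d: "is_deriv_Omega psi dpsi"
  shows "(psi \<longlongrightarrow> lim_minus0 psi) (at_left 0)"
proof -
  have "set_integrable lborel {-1..<0} dpsi"
    by (rule set_integrable_subset[OF set_integrable_L2_Icc[OF is_deriv_Omega_L2[OF d], of "-1" 0]]) auto
  hence "((\<lambda>t. LINT s:{-1..t}|lborel. dpsi s) \<longlongrightarrow> (LINT s:{-1..<0}|lborel. dpsi s)) (at_left 0)"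
    by (intro tendsto_set_lebesgue_integral_at_left) auto
  hence "((\<lambda>t. psi (-1) + (LINT s:{-1..t}|lborel. dpsi s)) \<longlongrightarrow> psi (-1) + (LINT s:{-1..<0}|lborel. dpsi s)) (at_left 0)"
    by (intro tendsto_intros)
  moreover have "\<forall>\<^sub>F t in at_left 0. psi (-1) + (LINT s:{-1..t}|lborel. dpsi s) = psi t"
    by (intro eventually_at_leftI[of "-1"]) (simp_all add: is_deriv_Omega_integral[OF d, symmetric])
  ultimately have "(psi \<longlongrightarrow> psi (-1) + (LINT s:{-1..<0}|lborel. dpsi s)) (at_left 0)"
    by (rule Lim_transform_eventually)
  thus ?thesis by (simp add: lim_minus0_eq)
qed

section \<open>Integration by parts\<close>

lemma integrable_lborel_pair_mult:
  fixes f g :: "real \<Rightarrow> complex"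
  assumes f: "integrable lborel f" and g: "integrable lborel g"
  shows "integrable (lborel \<Otimes>\<^sub>M lborel) (\<lambda>(t, s). f t * g s)"
proof (rule lborel_pair.Fubini_integrable)
  have [measurable]: "f \<in> borel_measurable borel" "g \<in> borel_measurable borel"
    using f g by (simp_all add: borel_measurable_integrable)
  show "(\<lambda>(t, s). f t * g s) \<in> borel_measurable (lborel \<Otimes>\<^sub>M lborel)"
    by measurable
  have "(\<lambda>t. \<integral>s. norm (f t * g s) \<partial>lborel) = (\<lambda>t. norm (f t) * (\<integral>s. norm (g s) \<partial>lborel))"
    by (simp add: norm_mult)
  thus "integrable lborel (\<lambda>t. \<integral>s. norm (case (t, s) of (t, s) \<Rightarrow> f t * g s) \<partial>lborel)"
    using f by (simp add: integrable_norm)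
  show "AE t in lborel. integrable lborel (\<lambda>s. case (t, s) of (t, s) \<Rightarrow> f t * g s)"
    using g by simp
qed

lemma integral_fst_add_integral_snd:
  fixes K1 K2 :: "real \<Rightarrow> real \<Rightarrow> 'a::{banach, second_countable_topology}"
  assumes K1: "integrable (lborel \<Otimes>\<^sub>M lborel) (\<lambda>(t, s). K1 t s)"
    and K2: "integrable (lborel \<Otimes>\<^sub>M lborel) (\<lambda>(t, s). K2 t s)"
  shows "integrable lborel (\<lambda>t. (\<integral>s. K1 t s \<partial>lborel) + (\<integral>u. K2 u t \<partial>lborel))"
    and "(\<integral>t. (\<integral>s. K1 t s \<partial>lborel) + (\<integral>u. K2 u t \<partial>lborel) \<partial>lborel)
       = (\<integral>t. \<integral>s. K1 t s + K2 t s \<partial>lborel \<partial>lborel)"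
proof -
  show "integrable lborel (\<lambda>t. (\<integral>s. K1 t s \<partial>lborel) + (\<integral>u. K2 u t \<partial>lborel))"
    using lborel_pair.integrable_fst[OF K1] lborel_pair.integrable_snd[OF K2] by simp
  have "(\<integral>t. (\<integral>s. K1 t s \<partial>lborel) + (\<integral>u. K2 u t \<partial>lborel) \<partial>lborel)
      = (\<integral>t. \<integral>s. K1 t s \<partial>lborel \<partial>lborel) + (\<integral>t. \<integral>u. K2 u t \<partial>lborel \<partial>lborel)"
    using lborel_pair.integrable_fst[OF K1] lborel_pair.integrable_snd[OF K2] by simp
  also have "(\<integral>t. \<integral>u. K2 u t \<partial>lborel \<partial>lborel) = (\<integral>t. \<integral>s. K2 t s \<partial>lborel \<partial>lborel)"
    by (rule lborel_pair.Fubini_integral[OF K2])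
  also have "(\<integral>t. \<integral>s. K1 t s \<partial>lborel \<partial>lborel) + \<dots>
      = (\<integral>t. (\<integral>s. K1 t s \<partial>lborel) + (\<integral>s. K2 t s \<partial>lborel) \<partial>lborel)"
    using lborel_pair.integrable_fst[OF K1] lborel_pair.integrable_fst[OF K2]
    by (rule Bochner_Integration.integral_add[symmetric])
  also have "\<dots> = (\<integral>t. \<integral>s. K1 t s + K2 t s \<partial>lborel \<partial>lborel)"
  proof (rule integral_cong_AE)
    show "AE t in lborel. (\<integral>s. K1 t s \<partial>lborel) + (\<integral>s. K2 t s \<partial>lborel) = (\<integral>s. K1 t s + K2 t s \<partial>lborel)"
      using lborel_pair.AE_integrable_fst[OF K1] lborel_pair.AE_integrable_fst[OF K2]
      by eventually_elim simp
  next
    have "integrable (lborel \<Otimes>\<^sub>M lborel) (\<lambda>(t, s). K1 t s + K2 t s)"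
      using Bochner_Integration.integrable_add[OF K1 K2] by (simp add: case_prod_beta')
    thus "(\<lambda>t. \<integral>s. K1 t s + K2 t s \<partial>lborel) \<in> borel_measurable lborel"
      by (intro borel_measurable_integrable lborel_pair.integrable_fst)
  qed (use lborel_pair.integrable_fst[OF K1] lborel_pair.integrable_fst[OF K2] in simp)
  finally show "(\<integral>t. (\<integral>s. K1 t s \<partial>lborel) + (\<integral>u. K2 u t \<partial>lborel) \<partial>lborel)
      = (\<integral>t. \<integral>s. K1 t s + K2 t s \<partial>lborel \<partial>lborel)" .
qed

text \<open>The triangles s < t and t \<le> s of the plane together carry the integral of f t * g s.\<close>
lemma integral_mult_primitives:
  fixes f g :: "real \<Rightarrow> complex"
  assumes f: "integrable lborel f" and g: "integrable lborel g"
  defines "F t \<equiv> LINT s:{..t}|lborel. f s" and "G t \<equiv> LINT s:{..t}|lborel. g s"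
  shows "integrable lborel (\<lambda>t. f t * G t + F t * g t)"
    and "(\<integral>t. f t * G t + F t * g t \<partial>lborel) = (\<integral>t. f t \<partial>lborel) * (\<integral>t. g t \<partial>lborel)"
proof -
  have [measurable]: "f \<in> borel_measurable borel" "g \<in> borel_measurable borel"
    using f g by (simp_all add: borel_measurable_integrable)
  define K1 where "K1 t s = (if s < t then f t * g s else 0)" for t s
  define K2 where "K2 t s = (if t \<le> s then f t * g s else 0)" for t s
  have [measurable]: "(\<lambda>(t, s). K1 t s) \<in> borel_measurable (lborel \<Otimes>\<^sub>M lborel)"
    unfolding K1_def by measurable
  have [measurable]: "(\<lambda>(t, s). K2 t s) \<in> borel_measurable (lborel \<Otimes>\<^sub>M lborel)"
    unfolding K2_def by measurable
  have K1: "integrable (lborel \<Otimes>\<^sub>M lborel) (\<lambda>(t, s). K1 t s)"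
    and K2: "integrable (lborel \<Otimes>\<^sub>M lborel) (\<lambda>(t, s). K2 t s)"
    by (rule Bochner_Integration.integrable_bound[OF integrable_lborel_pair_mult[OF f g]],
        simp, auto simp: K1_def K2_def split: prod.split)+
  have "(\<integral>s. K1 t s \<partial>lborel) = f t * (\<integral>s. indicator {..<t} s *\<^sub>R g s \<partial>lborel)" for t
    unfolding K1_def
    by (subst integral_mult_right_zero[symmetric], rule Bochner_Integration.integral_cong)
      (auto simp: indicator_def)
  also have "(\<integral>s. indicator {..<t} s *\<^sub>R g s \<partial>lborel) = G t" for t
    unfolding G_def set_lebesgue_integral_def
    by (rule integral_cong_AE) (auto intro!: eventually_mono[OF AE_lborel_singleton[of t]]
        simp: indicator_def)
  finally have K1_fst: "(\<integral>s. K1 t s \<partial>lborel) = f t * G t" for t .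
  have K2_snd: "(\<integral>u. K2 u t \<partial>lborel) = F t * g t" for t
    unfolding K2_def F_def set_lebesgue_integral_def
    by (subst integral_mult_left_zero[symmetric], rule Bochner_Integration.integral_cong)
      (auto simp: indicator_def)
  have K1_K2: "K1 t s + K2 t s = f t * g s" for t s
    by (simp add: K1_def K2_def)
  show "integrable lborel (\<lambda>t. f t * G t + F t * g t)"
    using integral_fst_add_integral_snd(1)[OF K1 K2] by (simp add: K1_fst K2_snd)
  show "(\<integral>t. f t * G t + F t * g t \<partial>lborel) = (\<integral>t. f t \<partial>lborel) * (\<integral>t. g t \<partial>lborel)"
    using integral_fst_add_integral_snd(2)[OF K1 K2] by (simp add: K1_fst K2_snd K1_K2)
qed

lemma set_integral_Icc_product_rule:
  fixes p q dp dq :: "real \<Rightarrow> complex"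
  assumes "a \<le> b"
    and dp: "set_integrable lborel {a..b} dp" and dq: "set_integrable lborel {a..b} dq"
    and p: "\<And>t. t \<in> {a..b} \<Longrightarrow> p t - p a = (LINT s:{a..t}|lborel. dp s)"
    and q: "\<And>t. t \<in> {a..b} \<Longrightarrow> q t - q a = (LINT s:{a..t}|lborel. dq s)"
  shows "(LINT t:{a..b}|lborel. dp t * q t + p t * dq t) = p b * q b - p a * q a"
proof -
  define f where "f t = indicator {a..b} t *\<^sub>R dp t" for t
  define g where "g t = indicator {a..b} t *\<^sub>R dq t" for t
  define F where "F t = (LINT s:{..t}|lborel. f s)" for t
  define G where "G t = (LINT s:{..t}|lborel. g s)" for t
  have f_int: "integrable lborel f" and g_int: "integrable lborel g"
    using dp dq unfolding f_def g_def set_integrable_def .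
  have F: "F t = p t - p a" and G: "G t = q t - q a" if "t \<in> {a..b}" for t
    using p[OF that] q[OF that] that
    unfolding F_def G_def f_def g_def set_lebesgue_integral_def
    by (auto intro!: Bochner_Integration.integral_cong simp: indicator_def)
  have "(LINT t:{a..b}|lborel. dp t * q t + p t * dq t)
      = (\<integral>t. q a * f t + p a * g t + (f t * G t + F t * g t) \<partial>lborel)"
    unfolding set_lebesgue_integral_def
  proof (intro Bochner_Integration.integral_cong refl)
    fix t show "indicator {a..b} t *\<^sub>R (dp t * q t + p t * dq t)
        = q a * f t + p a * g t + (f t * G t + F t * g t)"
      by (cases "t \<in> {a..b}") (simp_all add: f_def g_def F G algebra_simps)
  qed
  also have "\<dots> = q a * (p b - p a) + p a * (q b - q a) + (p b - p a) * (q b - q a)"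
  proof -
    have "(\<integral>t. f t \<partial>lborel) = p b - p a" "(\<integral>t. g t \<partial>lborel) = q b - q a"
      using p[of b] q[of b] \<open>a \<le> b\<close> by (simp_all add: f_def g_def set_lebesgue_integral_def)
    thus ?thesis
      using f_int g_int integral_mult_primitives[OF f_int g_int, folded F_def G_def] by simp
  qed
  also have "\<dots> = p b * q b - p a * q a"
    by (simp add: algebra_simps)
  finally show ?thesis .
qed

lemma set_integral_cnj: "(LINT t:A|M. cnj (f t)) = cnj (LINT t:A|M. f t)"
proof -
  have "(\<lambda>t. indicator A t *\<^sub>R cnj (f t)) = (\<lambda>t. cnj (indicator A t *\<^sub>R f t))"
    by (auto simp: indicator_def)
  thus ?thesis
    unfolding set_lebesgue_integral_def by (simp only: Bochner_Integration.integral_cnj)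
qed

lemma is_deriv_Omega_mult_cnj:
  assumes d1: "is_deriv_Omega psi dpsi" and d2: "is_deriv_Omega phi dphi"
    and "x \<le> y" and Omega: "0 < x \<or> y < 0"
  shows "(LINT t:{x..y}|lborel. dpsi t * cnj (phi t) + psi t * cnj (dphi t))
       = psi y * cnj (phi y) - psi x * cnj (phi x)"
proof (rule set_integral_Icc_product_rule[OF \<open>x \<le> y\<close>])
  show "set_integrable lborel {x..y} dpsi" "set_integrable lborel {x..y} (\<lambda>t. cnj (dphi t))"
    using d1 d2 by (simp_all add: set_integrable_L2_Icc L2_cnj is_deriv_Omega_L2)
  fix t assume "t \<in> {x..y}"
  hence "x \<le> t" "0 < x \<or> t < 0" using Omega by auto
  thus "psi t - psi x = (LINT s:{x..t}|lborel. dpsi s)"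
    and "cnj (phi t) - cnj (phi x) = (LINT s:{x..t}|lborel. cnj (dphi s))"
    using is_deriv_Omega_integral[OF d1] is_deriv_Omega_integral[OF d2]
    by (simp_all add: set_integral_cnj flip: complex_cnj_diff)
qed

lemma integrable_tendsto_at_top_eq_0:
  fixes P :: "real \<Rightarrow> 'a::{banach, second_countable_topology}"
  assumes P: "integrable lborel P" and lim: "(P \<longlongrightarrow> l) at_top"
  shows "l = 0"
proof (rule ccontr)
  assume "l \<noteq> 0"
  hence "norm l / 2 > 0" by simp
  with lim have "\<forall>\<^sub>F t in at_top. dist (P t) l < norm l / 2"
    by (rule tendstoD)
  then obtain T where T: "\<And>t. t \<ge> T \<Longrightarrow> dist (P t) l < norm l / 2"
    by (auto simp: eventually_at_top_linorder)
  have large: "norm l / 2 \<le> norm (P t)" if "t \<ge> T" for t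
    using T[OF that] norm_triangle_ineq2[of l "P t"] by (simp add: dist_norm norm_minus_commute)
  have "real n * (norm l / 2) \<le> (\<integral>t. norm (P t) \<partial>lborel)" for n :: nat
  proof -
    have "real n * (norm l / 2) = (\<integral>t. indicator {T..T + real n} t * (norm l / 2) \<partial>lborel)"
      by simp
    also have "\<dots> \<le> (\<integral>t. norm (P t) \<partial>lborel)"
    proof (intro integral_mono integrable_norm integrable_mult_left P)
      show "integrable lborel (indicator {T..T + real n} :: real \<Rightarrow> real)"
        by (simp add: integrable_indicator_iff emeasure_lborel_Icc_eq)
    qed (use large in \<open>auto simp: indicator_def\<close>)
    finally show ?thesis .
  qed
  moreover obtain n :: nat where "real n > (\<integral>t. norm (P t) \<partial>lborel) / (norm l / 2)"
    using reals_Archimedean2 by blast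
  ultimately show False
    using \<open>norm l / 2 > 0\<close> by (auto simp: field_simps not_le[symmetric])
qed

lemma integrable_tendsto_at_bot_eq_0:
  fixes P :: "real \<Rightarrow> 'a::{banach, second_countable_topology}"
  assumes P: "integrable lborel P" and lim: "(P \<longlongrightarrow> l) at_bot"
  shows "l = 0"
proof (rule integrable_tendsto_at_top_eq_0)
  show "integrable lborel (\<lambda>t. P (- t))"
    using lborel_integrable_real_affine_iff[of "-1" P 0] P by simp
  show "((\<lambda>t. P (- t)) \<longlongrightarrow> l) at_top"
    using lim by (simp add: filterlim_at_bot_mirror)
qed

lemma set_integral_greaterThan_0_eq_tendsto:
  fixes g P :: "real \<Rightarrow> 'a::{banach, second_countable_topology}"
  assumes g: "integrable lborel g" and P: "integrable lborel P"
    and FTC: "\<And>x y. 0 < x \<Longrightarrow> x \<le> y \<Longrightarrow> P y - P x = (LINT t:{x..y}|lborel. g t)"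
    and lim: "(P \<longlongrightarrow> L) (at_right 0)"
  shows "(LINT t:{0<..}|lborel. g t) = - L"
proof -
  have g_on: "set_integrable lborel A g" if "A \<in> sets borel" for A
    using g that unfolding set_integrable_def by (intro integrable_mult_indicator) auto
  have "((\<lambda>u. P 1 + (LINT t:{1..u}|lborel. g t)) \<longlongrightarrow> P 1 + (LINT t:{1..}|lborel. g t)) at_top"
    by (intro tendsto_intros tendsto_set_lebesgue_integral_at_top g_on) auto
  moreover have "\<forall>\<^sub>F u in at_top. P 1 + (LINT t:{1..u}|lborel. g t) = P u"
    using eventually_ge_at_top[of 1] by eventually_elim (simp add: FTC[symmetric])
  ultimately have "(P \<longlongrightarrow> P 1 + (LINT t:{1..}|lborel. g t)) at_top"
    by (rule Lim_transform_eventually)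
  hence "P 1 + (LINT t:{1..}|lborel. g t) = 0"
    by (rule integrable_tendsto_at_top_eq_0[OF P])
  hence top: "(LINT t:{1..}|lborel. g t) = - P 1"
    by (simp add: eq_neg_iff_add_eq_0 add.commute)
  have "((\<lambda>x. P 1 - (LINT t:{x..1}|lborel. g t)) \<longlongrightarrow> P 1 - (LINT t:{0<..1}|lborel. g t)) (at_right 0)"
    by (intro tendsto_intros tendsto_set_lebesgue_integral_at_right g_on) auto
  moreover have "\<forall>\<^sub>F x in at_right 0. P 1 - (LINT t:{x..1}|lborel. g t) = P x"
    by (intro eventually_at_rightI[of 0 1]) (simp_all add: FTC[symmetric])
  ultimately have "(P \<longlongrightarrow> P 1 - (LINT t:{0<..1}|lborel. g t)) (at_right 0)"
    by (rule Lim_transform_eventually)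
  hence near: "(LINT t:{0<..1}|lborel. g t) = P 1 - L"
    using tendsto_unique[OF _ lim] by (simp add: algebra_simps)
  have "{0<..} = {0<..1} \<union> {1::real..}"
    by auto
  hence "(LINT t:{0<..}|lborel. g t) = (LINT t:{0<..1} \<union> {1..}|lborel. g t)"
    by simp
  also have "\<dots> = (LINT t:{0<..1}|lborel. g t) + (LINT t:{1..}|lborel. g t)"
    using AE_lborel_singleton[of 1] by (intro set_integral_Un_AE g_on) (auto elim: AE_mp)
  finally show ?thesis
    using near top by simp
qed

lemma set_integral_lessThan_0_eq_tendsto:
  fixes g P :: "real \<Rightarrow> 'a::{banach, second_countable_topology}"
  assumes g: "integrable lborel g" and P: "integrable lborel P"
    and FTC: "\<And>x y. x \<le> y \<Longrightarrow> y < 0 \<Longrightarrow> P y - P x = (LINT t:{x..y}|lborel. g t)"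
    and lim: "(P \<longlongrightarrow> L) (at_left 0)"
  shows "(LINT t:{..<0}|lborel. g t) = L"
proof -
  have g_on: "set_integrable lborel A g" if "A \<in> sets borel" for A
    using g that unfolding set_integrable_def by (intro integrable_mult_indicator) auto
  have "((\<lambda>u. P (-1) - (LINT t:{u..-1}|lborel. g t)) \<longlongrightarrow> P (-1) - (LINT t:{..-1}|lborel. g t)) at_bot"
    by (intro tendsto_intros tendsto_set_lebesgue_integral_at_bot g_on) auto
  moreover have "\<forall>\<^sub>F u in at_bot. P (-1) - (LINT t:{u..-1}|lborel. g t) = P u"
    using eventually_le_at_bot[of "-1"] by eventually_elim (simp add: FTC[symmetric])
  ultimately have "(P \<longlongrightarrow> P (-1) - (LINT t:{..-1}|lborel. g t)) at_bot"
    by (rule Lim_transform_eventually)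
  hence "P (-1) - (LINT t:{..-1}|lborel. g t) = 0"
    by (rule integrable_tendsto_at_bot_eq_0[OF P])
  hence bot: "(LINT t:{..-1}|lborel. g t) = P (-1)"
    by simp
  have "((\<lambda>y. P (-1) + (LINT t:{-1..y}|lborel. g t)) \<longlongrightarrow> P (-1) + (LINT t:{-1..<0}|lborel. g t)) (at_left 0)"
    by (intro tendsto_intros tendsto_set_lebesgue_integral_at_left g_on) auto
  moreover have "\<forall>\<^sub>F y in at_left 0. P (-1) + (LINT t:{-1..y}|lborel. g t) = P y"
    by (intro eventually_at_leftI[of "-1"]) (simp_all add: FTC[symmetric])
  ultimately have "(P \<longlongrightarrow> P (-1) + (LINT t:{-1..<0}|lborel. g t)) (at_left 0)"
    by (rule Lim_transform_eventually)
  hence near: "(LINT t:{-1..<0}|lborel. g t) = L - P (-1)"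
    using tendsto_unique[OF _ lim] by (simp add: algebra_simps)
  have "{..<0} = {..-1} \<union> {-1::real..<0}"
    by auto
  hence "(LINT t:{..<0}|lborel. g t) = (LINT t:{..-1} \<union> {-1..<0}|lborel. g t)"
    by simp
  also have "\<dots> = (LINT t:{..-1}|lborel. g t) + (LINT t:{-1..<0}|lborel. g t)"
    using AE_lborel_singleton[of "-1"] by (intro set_integral_Un_AE g_on) (auto elim: AE_mp)
  finally show ?thesis
    using near bot by simp
qed

lemma integration_by_parts_Omega:
  assumes d1: "is_deriv_Omega psi dpsi" and d2: "is_deriv_Omega phi dphi"
    and psi: "L2 psi" and phi: "L2 phi"
  shows "ip dpsi phi + ip psi dphi
       = lim_minus0 psi * cnj (lim_minus0 phi) - lim_plus0 psi * cnj (lim_plus0 phi)"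
proof -
  define g where "g t = dpsi t * cnj (phi t) + psi t * cnj (dphi t)" for t
  define P where "P t = psi t * cnj (phi t)" for t
  have g_int: "integrable lborel g"
    unfolding g_def using is_deriv_Omega_L2[OF d1] is_deriv_Omega_L2[OF d2] psi phi
    by (intro Bochner_Integration.integrable_add integrable_ip_L2)
  have [measurable]: "g \<in> borel_measurable borel"
    using borel_measurable_integrable[OF g_int] by simp
  have P_int: "integrable lborel P"
    unfolding P_def using psi phi by (rule integrable_ip_L2)
  have FTC: "P y - P x = (LINT t:{x..y}|lborel. g t)" if "x \<le> y" "0 < x \<or> y < 0" for x y
    unfolding P_def g_def using is_deriv_Omega_mult_cnj[OF d1 d2 that] ..
  have right: "(LINT t:{0<..}|lborel. g t) = - (lim_plus0 psi * cnj (lim_plus0 phi))"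
  proof (rule set_integral_greaterThan_0_eq_tendsto[OF g_int P_int])
    show "(P \<longlongrightarrow> lim_plus0 psi * cnj (lim_plus0 phi)) (at_right 0)"
      unfolding P_def
      by (intro tendsto_intros is_deriv_Omega_tendsto_plus0[OF d1] is_deriv_Omega_tendsto_plus0[OF d2])
  qed (use FTC in auto)
  have left: "(LINT t:{..<0}|lborel. g t) = lim_minus0 psi * cnj (lim_minus0 phi)"
  proof (rule set_integral_lessThan_0_eq_tendsto[OF g_int P_int])
    show "(P \<longlongrightarrow> lim_minus0 psi * cnj (lim_minus0 phi)) (at_left 0)"
      unfolding P_def
      by (intro tendsto_intros is_deriv_Omega_tendsto_minus0[OF d1] is_deriv_Omega_tendsto_minus0[OF d2])
  qed (use FTC in auto)
  have "ip dpsi phi + ip psi dphi = (\<integral>t. g t \<partial>lborel)"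
    unfolding ip_def g_def using d1 d2 psi phi
    by (simp add: integrable_ip_L2 is_deriv_Omega_L2)
  also have "\<dots> = (LINT t:{..<0} \<union> {0<..}|lborel. g t)"
    unfolding set_lebesgue_integral_def
    by (rule integral_cong_AE) (auto intro!: eventually_mono[OF AE_lborel_singleton[of 0]]
        simp: indicator_def)
  also have "\<dots> = (LINT t:{..<0}|lborel. g t) + (LINT t:{0<..}|lborel. g t)"
    using g_int by (intro set_integral_Un) (auto simp: set_integrable_def integrable_mult_indicator)
  finally show ?thesis
    using left right by simp
qed

section \<open>Green's formula and symmetry\<close>

definition bv_minus :: "(real \<Rightarrow> complex) \<Rightarrow> (real \<Rightarrow> complex) \<Rightarrow> complex" where
  "bv_minus v1 psi = lim_minus0 psi + \<i> * ip psi v1"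

definition bv_plus :: "(real \<Rightarrow> complex) \<Rightarrow> (real \<Rightarrow> complex) \<Rightarrow> complex" where
  "bv_plus v2 psi = lim_plus0 psi - \<i> * ip psi v2"

lemma dom_A_iff:
  "psi \<in> dom_A v1 v2 \<alpha> \<longleftrightarrow> W21_Omega psi \<and> bv_plus v2 psi = exp (\<i> * of_real \<alpha>) * bv_minus v1 psi"
  unfolding dom_A_def bv_minus_def bv_plus_def by simp

lemma A_op_eq:
  "A_op v1 v2 psi dpsi = (\<lambda>x. (\<i> * dpsi x + (lim_minus0 psi + \<i>/2 * ip psi v1) * v1 x)
                             + (lim_plus0 psi - \<i>/2 * ip psi v2) * v2 x)"
  unfolding A_op_def by (simp add: fun_eq_iff mult.commute)

lemma L2_A_op:
  assumes "L2 v1" "L2 v2" "is_deriv_Omega psi dpsi"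
  shows "L2 (A_op v1 v2 psi dpsi)"
  unfolding A_op_eq using assms(1,2) is_deriv_Omega_L2[OF assms(3)]
  by (intro L2_add L2_mult_left)

lemma ip_A_op_left:
  assumes "L2 v1" "L2 v2" "is_deriv_Omega psi dpsi" "L2 phi"
  shows "ip (A_op v1 v2 psi dpsi) phi = \<i> * ip dpsi phi
           + (lim_minus0 psi + \<i>/2 * ip psi v1) * ip v1 phi + (lim_plus0 psi - \<i>/2 * ip psi v2) * ip v2 phi"
  unfolding A_op_eq using assms
  by (simp add: ip_add_left ip_mult_left L2_add L2_mult_left is_deriv_Omega_L2)

lemma A_op_Green_formula:
  assumes v: "L2 v1" "L2 v2"
    and d1: "is_deriv_Omega psi dpsi" and d2: "is_deriv_Omega phi dphi"
    and psi: "L2 psi" and phi: "L2 phi"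
  shows "ip (A_op v1 v2 psi dpsi) phi - ip psi (A_op v1 v2 phi dphi)
       = \<i> * (bv_minus v1 psi * cnj (bv_minus v1 phi) - bv_plus v2 psi * cnj (bv_plus v2 phi))"
proof -
  have "ip psi (A_op v1 v2 phi dphi) = cnj (ip (A_op v1 v2 phi dphi) psi)"
    by (rule ip_commute)
  also have "\<dots> = - \<i> * cnj (ip dphi psi) + cnj (lim_minus0 phi + \<i>/2 * ip phi v1) * ip psi v1
                  + cnj (lim_plus0 phi - \<i>/2 * ip phi v2) * ip psi v2"
    unfolding ip_A_op_left[OF v d2 psi] ip_commute[of v1 psi] ip_commute[of v2 psi] by simp
  finally have right: "ip psi (A_op v1 v2 phi dphi) = \<dots>" .
  have left: "ip (A_op v1 v2 psi dpsi) phi = \<i> * ip dpsi phi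
      + (lim_minus0 psi + \<i>/2 * ip psi v1) * cnj (ip phi v1) + (lim_plus0 psi - \<i>/2 * ip psi v2) * cnj (ip phi v2)"
    unfolding ip_A_op_left[OF v d1 phi] ip_commute[of v1 phi] ip_commute[of v2 phi] ..
  have J: "ip dpsi phi
      = lim_minus0 psi * cnj (lim_minus0 phi) - lim_plus0 psi * cnj (lim_plus0 phi) - cnj (ip dphi psi)"
    using integration_by_parts_Omega[OF d1 d2 psi phi] by (simp add: ip_commute[of psi] algebra_simps)
  show ?thesis
    unfolding left right J bv_minus_def bv_plus_def
    by (simp add: algebra_simps)
qed

lemma A_op_symmetric:
  assumes v: "L2 v1" "L2 v2"
    and psi: "psi \<in> dom_A v1 v2 \<alpha>" and phi: "phi \<in> dom_A v1 v2 \<alpha>"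
    and d1: "is_deriv_Omega psi dpsi" and d2: "is_deriv_Omega phi dphi"
  shows "ip (A_op v1 v2 psi dpsi) phi = ip psi (A_op v1 v2 phi dphi)"
proof -
  define e where "e = exp (\<i> * of_real \<alpha>)"
  have "e * cnj e = 1"
    using complex_norm_square[of e] by (simp add: e_def norm_exp_i_times)
  moreover have "bv_plus v2 psi = e * bv_minus v1 psi" "bv_plus v2 phi = e * bv_minus v1 phi"
    using psi phi unfolding dom_A_iff e_def by simp_all
  ultimately have "bv_plus v2 psi * cnj (bv_plus v2 phi) = bv_minus v1 psi * cnj (bv_minus v1 phi)"
    by (simp add: algebra_simps)
  moreover have "L2 psi" "L2 phi"
    using psi phi by (simp_all add: dom_A_iff W21_Omega_L2)
  ultimately show ?thesis
    using A_op_Green_formula[OF v d1 d2] by simp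
qed

section \<open>Steklov averages and density of W_2^1(Omega)\<close>

lemma L2_dist_sq_tendsto_0_dominated:
  fixes f :: "real \<Rightarrow> complex" and h :: "nat \<Rightarrow> real \<Rightarrow> complex"
  assumes [measurable]: "f \<in> borel_measurable borel" "\<And>n. h n \<in> borel_measurable borel"
    and lim: "AE x in lborel. (\<lambda>n. h n x) \<longlonglongrightarrow> f x"
    and w: "integrable lborel w" and bound: "\<And>n x. (cmod (f x - h n x))\<^sup>2 \<le> w x"
  shows "(\<lambda>n. L2_dist_sq f (h n)) \<longlonglongrightarrow> 0"
proof -
  have "(\<lambda>n. L2_dist_sq f (h n)) \<longlonglongrightarrow> (\<integral>x. 0 \<partial>(lborel :: real measure))"
  proof (rule integral_dominated_convergence)
    show "AE x in lborel. (\<lambda>n. (cmod (f x - h n x))\<^sup>2) \<longlonglongrightarrow> 0"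
      using lim
    proof eventually_elim
      case (elim x)
      have "(\<lambda>n. (cmod (f x - h n x))\<^sup>2) \<longlonglongrightarrow> (cmod (f x - f x))\<^sup>2"
        by (intro tendsto_intros elim)
      thus ?case by simp
    qed
  qed (use bound w in auto)
  thus ?thesis by simp
qed

definition steklov :: "real \<Rightarrow> (real \<Rightarrow> complex) \<Rightarrow> real \<Rightarrow> complex" where
  "steklov c f x = (LINT t:{x..x+c}|lborel. f t) / of_real c"

lemma steklov_measurable [measurable]:
  assumes [measurable]: "f \<in> borel_measurable borel"
  shows "steklov c f \<in> borel_measurable borel"
proof -
  have "steklov c f = (\<lambda>x. (\<integral>t. of_bool (x \<le> t \<and> t \<le> x + c) *\<^sub>R f t \<partial>lborel) / of_real c)"
    unfolding steklov_def set_lebesgue_integral_def by (auto simp: indicator_def)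
  also have "\<dots> \<in> borel_measurable borel"
    by measurable
  finally show ?thesis .
qed

lemma steklov_tendsto_AE:
  assumes f: "\<And>a b. set_integrable lborel {a..b} f"
  shows "AE x in lborel. ((\<lambda>c. steklov c f x) \<longlongrightarrow> f x) (at_right 0)"
proof -
  have "f integrable_on cbox a b" for a b :: real
    using set_borel_integral_eq_integral(1)[OF f] by simp
  then obtain N where N: "negligible N"
    and lim: "\<And>x e. x \<notin> N \<Longrightarrow> 0 < e \<Longrightarrow> \<exists>d>0. \<forall>h. 0 < h \<and> h < d \<longrightarrow>
       norm (integral (cbox x (x + h *\<^sub>R One)) f /\<^sub>R h ^ DIM(real) - f x) < e"
    \<comment> \<open>Lebesgue's differentiation theorem\<close>
    by (rule integrable_ccontinuous_explicit) blast
  have "AE x in lebesgue. x \<notin> N"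
    using N by (simp add: negligible_iff_null_sets AE_not_in)
  hence "AE x in lborel. x \<notin> N"
    by (simp add: AE_completion_iff)
  thus ?thesis
  proof eventually_elim
    case (elim x)
    show "((\<lambda>c. steklov c f x) \<longlongrightarrow> f x) (at_right 0)"
    proof (rule tendstoI)
      fix e :: real assume "0 < e"
      then obtain d where "d > 0" and d: "\<And>h. 0 < h \<Longrightarrow> h < d \<Longrightarrow>
          norm (integral {x..x+h} f /\<^sub>R h - f x) < e"
        using lim[OF elim \<open>0 < e\<close>] by auto
      show "\<forall>\<^sub>F c in at_right 0. dist (steklov c f x) (f x) < e"
        unfolding eventually_at_right[OF \<open>d > 0\<close>]
      proof (intro exI conjI allI impI)
        fix c assume "0 < c" "c < d"
        thus "dist (steklov c f x) (f x) < e"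
          using d[OF \<open>0 < c\<close> \<open>c < d\<close>] set_borel_integral_eq_integral(2)[OF f, of x "x + c"]
          by (simp add: steklov_def dist_norm scaleR_conv_of_real divide_inverse mult.commute)
      qed (fact \<open>d > 0\<close>)
    qed
  qed
qed

lemma set_integral_Icc_translate:
  fixes f :: "real \<Rightarrow> 'a::{banach, second_countable_topology}"
  shows "(LINT t:{x..y}|lborel. f (t + c)) = (LINT t:{x+c..y+c}|lborel. f t)"
proof -
  have "(LINT t:{x+c..y+c}|lborel. f t)
      = (\<integral>t. indicator {x+c..y+c} (c + 1 * t) *\<^sub>R f (c + 1 * t) \<partial>lborel)"
    unfolding set_lebesgue_integral_def
    using lborel_integral_real_affine[where c=1 and t=c and f="\<lambda>s. indicator {x+c..y+c} s *\<^sub>R f s"]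
    by simp
  also have "\<dots> = (LINT t:{x..y}|lborel. f (t + c))"
    unfolding set_lebesgue_integral_def
    by (intro Bochner_Integration.integral_cong) (auto simp: indicator_def add.commute)
  finally show ?thesis ..
qed

lemma set_integral_Icc_split:
  fixes f :: "real \<Rightarrow> 'a::{banach, second_countable_topology}"
  assumes f: "set_integrable lborel {a..c} f" and "a \<le> b" "b \<le> c"
  shows "(LINT t:{a..c}|lborel. f t) = (LINT t:{a..b}|lborel. f t) + (LINT t:{b..c}|lborel. f t)"
proof -
  have "{a..c} = {a..b} \<union> {b..c}"
    using assms(2,3) by auto
  thus ?thesis
    using AE_lborel_singleton[of b] assms(2,3)
    by (simp, intro set_integral_Un_AE set_integrable_subset[OF f]) (auto elim: AE_mp)
qed

lemma L2_translate: "L2 f \<Longrightarrow> L2 (\<lambda>t. f (t + c))"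
  unfolding L2_def
  using lborel_integrable_real_affine_iff[of 1 "\<lambda>t. (cmod (f t))\<^sup>2" c]
  by (auto simp: add.commute)

lemma is_deriv_Omega_steklov:
  assumes f: "L2 f" and "c > 0"
  shows "is_deriv_Omega (steklov c f) (\<lambda>x. (f (x + c) - f x) / of_real c)"
  unfolding is_deriv_Omega_def
proof (intro conjI allI impI)
  show "L2 (\<lambda>x. (f (x + c) - f x) / of_real c)"
    using L2_mult_left[OF L2_diff[OF L2_translate[OF f] f], of "1 / of_real c"] by simp
  fix x y :: real assume "x \<le> y \<and> (0 < x \<or> y < 0)"
  hence "x \<le> y" by simp
  define I where "I a b = (LINT t:{a..b}|lborel. f t)" for a b
  have split: "I a b' = I a b + I b b'" if "a \<le> b" "b \<le> b'" for a b b'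
    unfolding I_def using set_integrable_L2_Icc[OF f] that by (rule set_integral_Icc_split)
  have "(LINT t:{x..y}|lborel. (f (t + c) - f t) / of_real c) = (I (x + c) (y + c) - I x y) / of_real c"
    unfolding I_def set_integral_Icc_translate[symmetric]
    using set_integrable_L2_Icc[OF L2_translate[OF f]] set_integrable_L2_Icc[OF f]
    by (simp add: set_integral_diff set_integral_divide_zero)
  also have "I (x + c) (y + c) - I x y = I y (y + c) - I x (x + c)"
    using split[of x y "y + c"] split[of x "x + c" "y + c"] \<open>x \<le> y\<close> \<open>c > 0\<close>
    by (simp add: algebra_simps)
  finally show "steklov c f y - steklov c f x = (LINT t:{x..y}|lborel. (f (t + c) - f t) / of_real c)"
    by (simp add: steklov_def I_def diff_divide_distrib)
qed

lemma norm_steklov_le: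
  assumes f: "\<And>a b. set_integrable lborel {a..b} f" and bound: "\<And>x. cmod (f x) \<le> M" and "c > 0"
  shows "cmod (steklov c f x) \<le> M"
proof -
  have "cmod (LINT t:{x..x+c}|lborel. f t) \<le> (LINT t:{x..x+c}|lborel. M)"
  proof (intro order_trans[OF set_integral_norm_bound] set_integral_mono)
    show "set_integrable lborel {x..x+c} (\<lambda>t. M)"
      unfolding set_integrable_def
      by (intro integrable_scaleR_left) (simp add: integrable_indicator_iff emeasure_lborel_Icc_eq)
  qed (use f bound in \<open>auto simp: set_integrable_norm\<close>)
  also have "\<dots> = c * M"
    using \<open>c > 0\<close> by (simp add: set_lebesgue_integral_def)
  finally show ?thesis
    using \<open>c > 0\<close> by (simp add: steklov_def norm_divide field_simps)
qed

lemma steklov_eq_0: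
  assumes "\<And>t. t \<notin> {a..b} \<Longrightarrow> f t = 0" and "x \<notin> {a - c..b}"
  shows "steklov c f x = 0"
proof -
  have "(LINT t:{x..x+c}|lborel. f t) = (LINT t:{x..x+c}|lborel. 0)"
    using assms unfolding set_lebesgue_integral_def
    by (intro Bochner_Integration.integral_cong) (auto simp: indicator_def)
  thus ?thesis by (simp add: steklov_def)
qed

lemma W21_Omega_steklov:
  assumes [measurable]: "f \<in> borel_measurable borel"
    and bound: "\<And>x. cmod (f x) \<le> M" and support: "\<And>x. x \<notin> {a..b} \<Longrightarrow> f x = 0"
    and "c > 0"
  shows "W21_Omega (steklov c f)"
  unfolding W21_Omega_def
proof
  have f: "L2 f"
    using bound support by (rule L2_bounded_support[OF assms(1)])
  show "L2 (steklov c f)"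
  proof (rule L2_bounded_support)
    show "cmod (steklov c f x) \<le> M" for x
      using set_integrable_L2_Icc[OF f] bound \<open>c > 0\<close> by (rule norm_steklov_le)
    show "x \<notin> {a - c..b} \<Longrightarrow> steklov c f x = 0" for x
      using support by (rule steklov_eq_0)
  qed simp
  show "\<exists>d. is_deriv_Omega (steklov c f) d"
    using is_deriv_Omega_steklov[OF f \<open>c > 0\<close>] by blast
qed

lemma L2_dist_sq_steklov_tendsto_0:
  assumes [measurable]: "f \<in> borel_measurable borel"
    and bound: "\<And>x. cmod (f x) \<le> M" and support: "\<And>x. x \<notin> {a..b} \<Longrightarrow> f x = 0"
  shows "(\<lambda>n. L2_dist_sq f (steklov (1 / Suc n) f)) \<longlonglongrightarrow> 0"
proof -
  have f: "L2 f"
    using bound support by (rule L2_bounded_support[OF assms(1)])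
  define h where "h n = steklov (1 / Suc n) f" for n
  have h_support: "h n x = 0" if "x \<notin> {a - 1..b}" for n x
  proof -
    have "a - 1 \<le> a - 1 / real (Suc n)"
      by (simp add: field_simps)
    hence "x \<notin> {a - 1 / real (Suc n)..b}"
      using that by (simp only: atLeastAtMost_iff) linarith
    with support show ?thesis
      unfolding h_def by (rule steklov_eq_0)
  qed
  have h_bound: "cmod (h n x) \<le> M" for n x
    unfolding h_def using set_integrable_L2_Icc[OF f] bound by (rule norm_steklov_le) simp
  have to_0: "filterlim (\<lambda>n. 1 / real (Suc n)) (at_right 0) sequentially"
    by (intro tendsto_imp_filterlim_at_right LIMSEQ_inverse_real_of_nat[unfolded inverse_eq_divide])
      simp
  have pointwise: "AE x in lborel. (\<lambda>n. h n x) \<longlonglongrightarrow> f x"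
    using steklov_tendsto_AE[OF set_integrable_L2_Icc[OF f]]
    unfolding h_def by eventually_elim (rule filterlim_compose[OF _ to_0])
  have "(\<lambda>n. L2_dist_sq f (h n)) \<longlonglongrightarrow> 0"
  proof (rule L2_dist_sq_tendsto_0_dominated[OF _ _ pointwise])
    show "integrable lborel (\<lambda>x. (2 * M)\<^sup>2 * indicator {a - 1..b} x :: real)"
      by (intro integrable_mult_right) (simp add: integrable_indicator_iff emeasure_lborel_Icc_eq)
    fix n x
    have "cmod (f x - h n x) \<le> 2 * M"
      using norm_triangle_ineq4[of "f x" "h n x"] bound[of x] h_bound[of n x] by simp
    hence "(cmod (f x - h n x))\<^sup>2 \<le> (2 * M)\<^sup>2"
      by (intro power_mono) auto
    thus "(cmod (f x - h n x))\<^sup>2 \<le> (2 * M)\<^sup>2 * indicator {a - 1..b} x"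
      using support[of x] h_support[of x n] by (auto simp: indicator_def)
  qed (simp_all add: h_def)
  thus ?thesis
    unfolding h_def .
qed

lemma W21_Omega_dense_bounded_support:
  assumes "f \<in> borel_measurable borel"
    and "\<And>x. cmod (f x) \<le> M" and "\<And>x. x \<notin> {a..b} \<Longrightarrow> f x = 0"
    and "\<epsilon> > 0"
  shows "\<exists>g. W21_Omega g \<and> L2_dist_sq f g < \<epsilon>"
proof -
  have "\<forall>\<^sub>F n in sequentially. L2_dist_sq f (steklov (1 / Suc n) f) < \<epsilon>"
    using L2_dist_sq_steklov_tendsto_0[where a=a and b=b, OF assms(1-3)] \<open>\<epsilon> > 0\<close> by (rule order_tendstoD)
  then obtain n where "L2_dist_sq f (steklov (1 / Suc n) f) < \<epsilon>"
    by (auto simp: eventually_sequentially)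
  moreover have "W21_Omega (steklov (1 / Suc n) f)"
    using W21_Omega_steklov[where a=a and b=b, OF assms(1-3), of "1 / Suc n"] by simp
  ultimately show ?thesis
    by blast
qed

definition truncate :: "nat \<Rightarrow> (real \<Rightarrow> complex) \<Rightarrow> real \<Rightarrow> complex" where
  "truncate n f x = (if \<bar>x\<bar> \<le> real n \<and> cmod (f x) \<le> real n then f x else 0)"

lemma truncate_measurable [measurable]:
  assumes [measurable]: "f \<in> borel_measurable borel"
  shows "truncate n f \<in> borel_measurable borel"
  unfolding truncate_def by measurable

lemma L2_dist_sq_truncate_tendsto_0:
  assumes f: "L2 f"
  shows "(\<lambda>n. L2_dist_sq f (truncate n f)) \<longlonglongrightarrow> 0"
proof (rule L2_dist_sq_tendsto_0_dominated)
  show "AE x in lborel. (\<lambda>n. truncate n f x) \<longlonglongrightarrow> f x"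
  proof (intro AE_I2 tendsto_eventually)
    fix x
    obtain N :: nat where "max \<bar>x\<bar> (cmod (f x)) \<le> real N"
      using real_arch_simple by blast
    thus "\<forall>\<^sub>F n in sequentially. truncate n f x = f x"
      unfolding truncate_def eventually_sequentially
      by (intro exI[of _ N]) (auto intro: order_trans[OF _ of_nat_mono])
  qed
  show "(cmod (f x - truncate n f x))\<^sup>2 \<le> (cmod (f x))\<^sup>2" for n x
    by (simp add: truncate_def)
  show "truncate n f \<in> borel_measurable borel" for n
    using L2_measurable[OF f] by (rule truncate_measurable)
qed (use f in \<open>simp_all add: L2_measurable integrable_L2_square\<close>)

lemma W21_Omega_dense_L2:
  assumes f: "L2 f" and "\<epsilon> > 0"
  shows "\<exists>g. W21_Omega g \<and> L2_dist_sq f g < \<epsilon>"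
proof -
  have "\<epsilon> / 4 > 0"
    using \<open>\<epsilon> > 0\<close> by simp
  with L2_dist_sq_truncate_tendsto_0[OF f]
  have "\<forall>\<^sub>F n in sequentially. L2_dist_sq f (truncate n f) < \<epsilon> / 4"
    by (rule order_tendstoD)
  then obtain n where n: "L2_dist_sq f (truncate n f) < \<epsilon> / 4"
    by (auto simp: eventually_sequentially)
  have meas: "truncate n f \<in> borel_measurable borel"
    using L2_measurable[OF f] by (rule truncate_measurable)
  have bound: "cmod (truncate n f x) \<le> real n"
    and support: "x \<notin> {- real n..real n} \<Longrightarrow> truncate n f x = 0" for x
    by (auto simp: truncate_def)
  obtain g where g: "W21_Omega g" "L2_dist_sq (truncate n f) g < \<epsilon> / 4"
    using W21_Omega_dense_bounded_support[OF meas bound support \<open>\<epsilon> / 4 > 0\<close>] by blast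
  have "L2_dist_sq f g \<le> 2 * L2_dist_sq f (truncate n f) + 2 * L2_dist_sq (truncate n f) g"
    using f L2_bounded_support[OF meas bound support] W21_Omega_L2[OF g(1)]
    by (rule L2_dist_sq_triangle)
  also have "\<dots> < \<epsilon>"
    using n g(2) by simp
  finally show ?thesis
    using g(1) by blast
qed

section \<open>Density of the domain\<close>

definition ramp :: "real \<Rightarrow> real \<Rightarrow> complex" where
  "ramp \<delta> x = of_real (if 0 < x then 1 - min x \<delta> / \<delta> else 0)"

lemma ramp_measurable [measurable]: "ramp \<delta> \<in> borel_measurable borel"
  unfolding ramp_def by measurable

lemma norm_ramp_le: "\<delta> > 0 \<Longrightarrow> cmod (ramp \<delta> x) \<le> 1"
  unfolding ramp_def norm_of_real by (auto simp: divide_le_eq_1 min_def)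

lemma ramp_eq_0: "\<delta> > 0 \<Longrightarrow> x \<notin> {0..\<delta>} \<Longrightarrow> ramp \<delta> x = 0"
  by (auto simp: ramp_def)

lemma L2_ramp: "\<delta> > 0 \<Longrightarrow> L2 (ramp \<delta>)"
  by (rule L2_bounded_support[OF ramp_measurable norm_ramp_le ramp_eq_0])

lemma integral_norm_ramp_square_le:
  assumes "\<delta> > 0"
  shows "(\<integral>x. (cmod (ramp \<delta> x))\<^sup>2 \<partial>lborel) \<le> \<delta>"
proof -
  have "(\<integral>x. (cmod (ramp \<delta> x))\<^sup>2 \<partial>lborel) \<le> (\<integral>x. indicator {0..\<delta>} x \<partial>lborel)"
  proof (intro integral_mono integrable_L2_square L2_ramp assms)
    show "integrable lborel (indicator {0..\<delta>} :: real \<Rightarrow> real)"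
      by (simp add: integrable_indicator_iff emeasure_lborel_Icc_eq)
    fix x
    show "(cmod (ramp \<delta> x))\<^sup>2 \<le> indicator {0..\<delta>} x"
      using norm_ramp_le[OF assms, of x] ramp_eq_0[OF assms, of x]
      by (cases "x \<in> {0..\<delta>}") (auto simp: power_le_one)
  qed
  thus ?thesis
    using assms by simp
qed

lemma measure_Icc_Int_Icc_0:
  fixes x y \<delta> :: real
  assumes "0 < x" "x \<le> y"
  shows "measure lborel ({x..y} \<inter> {0..\<delta>}) = min y \<delta> - min x \<delta>"
proof (cases "x \<le> \<delta>")
  case True
  hence "{x..y} \<inter> {0..\<delta>} = {x..min y \<delta>}"
    using assms by auto
  thus ?thesis
    using True assms by (simp add: min_def)
next
  case False
  hence "{x..y} \<inter> {0..\<delta>} = {}"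
    by auto
  thus ?thesis
    using False assms by (simp add: min_def)
qed

lemma is_deriv_Omega_ramp:
  assumes "\<delta> > 0"
  shows "is_deriv_Omega (ramp \<delta>) (\<lambda>x. of_real (- indicator {0..\<delta>} x / \<delta>))"
  unfolding is_deriv_Omega_def
proof (intro conjI allI impI)
  show "L2 (\<lambda>x. of_real (- indicator {0..\<delta>} x / \<delta>))"
    by (rule L2_bounded_support[where M="1 / \<delta>" and a=0 and b=\<delta>])
      (use assms in \<open>auto simp: indicator_def norm_divide\<close>)
  fix x y :: real assume xy: "x \<le> y \<and> (0 < x \<or> y < 0)"
  have "(LINT t:{x..y}|lborel. of_real (- indicator {0..\<delta>} t / \<delta>))
      = (\<integral>t. complex_of_real (- (1 / \<delta>) * indicator ({x..y} \<inter> {0..\<delta>}) t) \<partial>lborel)"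
    unfolding set_lebesgue_integral_def
    by (intro Bochner_Integration.integral_cong) (auto simp: indicator_def)
  also have "\<dots> = of_real (- (1 / \<delta>) * measure lborel ({x..y} \<inter> {0..\<delta>}))"
    by (simp del: Int_atLeastAtMost)
  also have "\<dots> = ramp \<delta> y - ramp \<delta> x"
  proof (cases "y < 0")
    case True
    hence "{x..y} \<inter> {0..\<delta>} = {}"
      by auto
    thus ?thesis
      using True xy by (simp add: ramp_def)
  next
    case False
    hence "0 < x"
      using xy by auto
    thus ?thesis
      using xy assms by (simp add: measure_Icc_Int_Icc_0 ramp_def diff_divide_distrib)
  qed
  finally show "ramp \<delta> y - ramp \<delta> x = (LINT t:{x..y}|lborel. of_real (- indicator {0..\<delta>} t / \<delta>))"
    by simp
qed

lemma W21_Omega_ramp: "\<delta> > 0 \<Longrightarrow> W21_Omega (ramp \<delta>)"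
  unfolding W21_Omega_def using L2_ramp is_deriv_Omega_ramp by blast

lemma ramp_tendsto_plus0:
  assumes "\<delta> > 0"
  shows "(ramp \<delta> \<longlongrightarrow> 1) (at_right 0)"
proof -
  have "((\<lambda>x. complex_of_real (1 - x / \<delta>)) \<longlongrightarrow> of_real (1 - 0 / \<delta>)) (at_right 0)"
    using assms by (intro tendsto_intros) simp
  moreover have "\<forall>\<^sub>F x in at_right 0. complex_of_real (1 - x / \<delta>) = ramp \<delta> x"
    using assms by (intro eventually_at_rightI[of 0 \<delta>]) (auto simp: ramp_def)
  ultimately show ?thesis
    by (simp add: Lim_transform_eventually)
qed

lemma ramp_tendsto_minus0: "(ramp \<delta> \<longlongrightarrow> 0) (at_left 0)"
proof -
  have "\<forall>\<^sub>F x in at_left 0. 0 = ramp \<delta> x"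
    by (intro eventually_at_leftI[of "-1"]) (auto simp: ramp_def)
  thus ?thesis
    by (rule Lim_transform_eventually[OF tendsto_const])
qed

lemma ip_ramp_tendsto_0:
  assumes v: "L2 v"
  shows "((\<lambda>\<delta>. ip (ramp \<delta>) v) \<longlongrightarrow> 0) (at_right 0)"
proof (rule tendsto_norm_zero_cancel, rule tendsto_sandwich)
  show "\<forall>\<^sub>F \<delta> in at_right 0. 0 \<le> cmod (ip (ramp \<delta>) v)"
    by simp
  show "\<forall>\<^sub>F \<delta> in at_right 0. cmod (ip (ramp \<delta>) v) \<le> sqrt \<delta> * L2_norm v"
    using eventually_at_right_less[of 0]
  proof eventually_elim
    case (elim \<delta>)
    have "cmod (ip (ramp \<delta>) v) \<le> L2_norm (ramp \<delta>) * L2_norm v"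
      by (rule norm_ip_le_L2_norm[OF L2_ramp[OF elim] v])
    also have "\<dots> \<le> sqrt \<delta> * L2_norm v"
      using integral_norm_ramp_square_le[OF elim]
      by (intro mult_right_mono) (auto simp: L2_norm_def)
    finally show ?case .
  qed
  have "((\<lambda>\<delta>. sqrt \<delta> * L2_norm v) \<longlongrightarrow> sqrt 0 * L2_norm v) (at_right 0)"
    by (intro tendsto_intros)
  thus "((\<lambda>\<delta>. sqrt \<delta> * L2_norm v) \<longlongrightarrow> 0) (at_right 0)"
    by simp
qed (rule tendsto_const)

text \<open>The boundary condition for g + c * ramp delta is linear in c, with solution c = D / kappa.\<close>
lemma add_ramp_in_dom_A:
  fixes \<alpha> :: real
  assumes v: "L2 v1" "L2 v2" and g: "W21_Omega g" and "\<delta> > 0"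
  defines "e \<equiv> exp (\<i> * of_real \<alpha>)"
  defines "\<kappa> \<equiv> 1 - \<i> * ip (ramp \<delta>) v2 - \<i> * e * ip (ramp \<delta>) v1"
    and "D \<equiv> e * bv_minus v1 g - bv_plus v2 g"
  assumes "\<kappa> \<noteq> 0"
  shows "(\<lambda>x. g x + D / \<kappa> * ramp \<delta> x) \<in> dom_A v1 v2 \<alpha>"
proof -
  obtain dg where dg: "is_deriv_Omega g dg"
    using g unfolding W21_Omega_def by blast
  define c where "c = D / \<kappa>"
  let ?psi = "\<lambda>x. g x + c * ramp \<delta> x"
  have "lim_plus0 ?psi = lim_plus0 g + c * 1"
    by (intro lim_plus0_eq tendsto_intros is_deriv_Omega_tendsto_plus0[OF dg] ramp_tendsto_plus0 \<open>\<delta> > 0\<close>)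
  moreover have "lim_minus0 ?psi = lim_minus0 g + c * 0"
    by (intro lim_minus0_eq tendsto_intros is_deriv_Omega_tendsto_minus0[OF dg] ramp_tendsto_minus0)
  moreover have "ip ?psi v = ip g v + c * ip (ramp \<delta>) v" if "L2 v" for v
    using ip_add_left[OF W21_Omega_L2[OF g] L2_mult_left[OF L2_ramp[OF \<open>\<delta> > 0\<close>]] that]
    by (simp only: ip_mult_left)
  ultimately have "bv_plus v2 ?psi - e * bv_minus v1 ?psi = c * \<kappa> - D"
    using v unfolding bv_plus_def bv_minus_def \<kappa>_def D_def by (simp add: algebra_simps)
  also have "c * \<kappa> = D"
    using \<open>\<kappa> \<noteq> 0\<close> by (simp add: c_def)
  finally have "bv_plus v2 ?psi = e * bv_minus v1 ?psi"
    by simp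
  moreover have "W21_Omega ?psi"
    using g W21_Omega_ramp[OF \<open>\<delta> > 0\<close>] by (rule W21_Omega_add_mult)
  ultimately show ?thesis
    unfolding dom_A_iff e_def c_def by simp
qed

lemma L2_dist_sq_add_ramp_le:
  assumes "\<delta> > 0"
  shows "L2_dist_sq g (\<lambda>x. g x + c * ramp \<delta> x) \<le> (cmod c)\<^sup>2 * \<delta>"
proof -
  have "L2_dist_sq g (\<lambda>x. g x + c * ramp \<delta> x) = (cmod c)\<^sup>2 * (\<integral>x. (cmod (ramp \<delta> x))\<^sup>2 \<partial>lborel)"
    by (simp add: norm_mult power_mult_distrib)
  also have "\<dots> \<le> (cmod c)\<^sup>2 * \<delta>"
    by (intro mult_left_mono integral_norm_ramp_square_le assms) simp
  finally show ?thesis .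
qed

lemma dom_A_dense_W21_Omega:
  assumes v: "L2 v1" "L2 v2" and g: "W21_Omega g" and "\<epsilon> > 0"
  shows "\<exists>psi\<in>dom_A v1 v2 \<alpha>. L2_dist_sq g psi < \<epsilon>"
proof -
  define e where "e = exp (\<i> * of_real \<alpha>)"
  define D where "D = e * bv_minus v1 g - bv_plus v2 g"
  define \<kappa> where "\<kappa> \<delta> = 1 - \<i> * ip (ramp \<delta>) v2 - \<i> * e * ip (ramp \<delta>) v1" for \<delta>
  define c where "c \<delta> = D / \<kappa> \<delta>" for \<delta>
  define psi where "psi \<delta> x = g x + c \<delta> * ramp \<delta> x" for \<delta> x
  have "(\<kappa> \<longlongrightarrow> 1 - \<i> * 0 - \<i> * e * 0) (at_right 0)"
    unfolding \<kappa>_def by (intro tendsto_intros ip_ramp_tendsto_0 v)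
  hence \<kappa>: "(\<kappa> \<longlongrightarrow> 1) (at_right 0)"
    by simp
  have "((\<lambda>\<delta>. (cmod (c \<delta>))\<^sup>2 * \<delta>) \<longlongrightarrow> (cmod (D / 1))\<^sup>2 * 0) (at_right 0)"
    unfolding c_def using \<kappa> by (intro tendsto_intros) simp_all
  hence "\<forall>\<^sub>F \<delta> in at_right 0. (cmod (c \<delta>))\<^sup>2 * \<delta> < \<epsilon>"
    using \<open>\<epsilon> > 0\<close> by (intro order_tendstoD) simp_all
  moreover have "\<forall>\<^sub>F \<delta> in at_right 0. \<kappa> \<delta> \<noteq> 0"
    by (rule tendsto_imp_eventually_ne[OF \<kappa>]) simp
  moreover note eventually_at_right_less[of 0]
  ultimately have "\<forall>\<^sub>F \<delta> in at_right 0. psi \<delta> \<in> dom_A v1 v2 \<alpha> \<and> L2_dist_sq g (psi \<delta>) < \<epsilon>"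
  proof eventually_elim
    case (elim \<delta>)
    have "psi \<delta> \<in> dom_A v1 v2 \<alpha>"
      unfolding psi_def c_def \<kappa>_def D_def e_def
      by (rule add_ramp_in_dom_A[OF v g]) (use elim in \<open>simp_all add: \<kappa>_def e_def\<close>)
    moreover have "L2_dist_sq g (psi \<delta>) \<le> (cmod (c \<delta>))\<^sup>2 * \<delta>"
      unfolding psi_def using elim(3) by (rule L2_dist_sq_add_ramp_le)
    ultimately show ?case
      using elim(1) by simp
  qed
  then obtain \<delta> where "psi \<delta> \<in> dom_A v1 v2 \<alpha>" "L2_dist_sq g (psi \<delta>) < \<epsilon>"
    using eventually_happens'[OF trivial_limit_at_right_real] by blast
  thus ?thesis
    by blast
qed

lemma dom_A_dense:
  assumes v: "L2 v1" "L2 v2" and f: "L2 f" and "\<epsilon> > 0"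
  shows "\<exists>psi\<in>dom_A v1 v2 \<alpha>. L2_norm (\<lambda>x. f x - psi x) < \<epsilon>"
proof -
  have "\<epsilon>\<^sup>2 / 4 > 0"
    using \<open>\<epsilon> > 0\<close> by simp
  then obtain g where g: "W21_Omega g" "L2_dist_sq f g < \<epsilon>\<^sup>2 / 4"
    using W21_Omega_dense_L2[OF f] by blast
  obtain psi where psi: "psi \<in> dom_A v1 v2 \<alpha>" "L2_dist_sq g psi < \<epsilon>\<^sup>2 / 4"
    using dom_A_dense_W21_Omega[OF v g(1) \<open>\<epsilon>\<^sup>2 / 4 > 0\<close>] by blast
  have "L2_dist_sq f psi \<le> 2 * L2_dist_sq f g + 2 * L2_dist_sq g psi"
    using f W21_Omega_L2[OF g(1)] W21_Omega_L2 psi(1)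
    by (intro L2_dist_sq_triangle) (auto simp: dom_A_iff)
  also have "\<dots> < \<epsilon>\<^sup>2"
    using g(2) psi(2) by simp
  finally have "L2_norm (\<lambda>x. f x - psi x) < sqrt (\<epsilon>\<^sup>2)"
    unfolding L2_norm_def by (rule real_sqrt_less_mono)
  thus ?thesis
    using psi(1) \<open>\<epsilon> > 0\<close> by auto
qed

theorem lemma3p1:
  fixes v1 v2 :: "real \<Rightarrow> complex" and \<alpha> :: real
  assumes "L2 v1" and "L2 v2"
  shows "(\<forall>f. L2 f \<longrightarrow> (\<forall>\<epsilon>>0. \<exists>psi\<in>dom_A v1 v2 \<alpha>. L2_norm (\<lambda>x. f x - psi x) < \<epsilon>))
       \<and> (\<forall>psi dpsi. psi \<in> dom_A v1 v2 \<alpha> \<longrightarrow> is_deriv_Omega psi dpsi \<longrightarrow> L2 (A_op v1 v2 psi dpsi))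
       \<and> (\<forall>psi phi dpsi dphi. psi \<in> dom_A v1 v2 \<alpha> \<longrightarrow> phi \<in> dom_A v1 v2 \<alpha> \<longrightarrow>
            is_deriv_Omega psi dpsi \<longrightarrow> is_deriv_Omega phi dphi \<longrightarrow>
            ip (A_op v1 v2 psi dpsi) phi = ip psi (A_op v1 v2 phi dphi))"
  using dom_A_dense[OF assms] L2_A_op[OF assms] A_op_symmetric[OF assms] by blast

end
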